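(* Let ${\mathbf{x}}^* \in \mathbb{R}^n$, ${\mathbf{x}}^*\ge 0$, $\mathcal{J} = \mathrm{supp}({\mathbf{x}}^* )$, and $s \in [\|{\mathbf{x}}^*\|_\infty, \infty]$. Let $\mathcal{J}' \supseteq \mathcal{J}$ be an index set for which there exists a vector ${\mathbf{c}}$ with $$\frac{P {\mathbf{e}}_j}{\| P {\mathbf{e}}_j \|_2} \cdot {\mathbf{c}} = 1 \ \ \forall j \in \mathcal{J}', \qquad \frac{P {\mathbf{e}}_i}{\| P {\mathbf{e}}_i \|_2} \cdot {\mathbf{c}} < 1 \ \ \forall i \in (\mathcal{J}')^c. \qquad (\dagger)$$ Then every solution ${\mathbf{y}}$ of $$\min_{0 \leq {\mathbf{x}} \leq s} \| W {\mathbf{x}} \|_1 \quad \text{subject to} \quad A {\mathbf{x}} = A {\mathbf{x}}^*$$ satisfies $\mathrm{supp}({\mathbf{y}}) \subseteq \mathcal{J}'$. Consequently, every such solution satisfies $\mathrm{supp}({\mathbf{y}}) \subseteq \overline{\mathcal{J}}$, where $\overline{\mathcal{J}} = \bigcap\{\mathcal{J}' : \mathcal{J}' \supseteq \mathcal{J} \text{ and there exists } {\mathbf{c}} \text{ such that } (\dagger) \text{ holds for } \mathcal{J}'\}$, assumed nonempty.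
   Context: $A \in \mathbb{R}^{m\times n}$ is a matrix, $A^\dagger$ its Moore–Penrose pseudoinverse, and $P = A^\dagger A$ the orthogonal projection onto $\mathcal{N}(A)^\perp$. ${\mathbf{e}}_1,\dots,{\mathbf{e}}_n$ are the standard unit vectors, assumed not to lie in $\mathcal{N}(A)$, so $w_i := \|P{\mathbf{e}}_i\|_2 > 0$; $W = \mathrm{diag}(w_1,\dots,w_n)$. Inequalities are componentwise; $s=\infty$ means only ${\mathbf{x}}\ge 0$. *)

theory Defs
  imports "HOL-Analysis.Analysis"
begin

definition is_pinv :: "real^'n^'m \<Rightarrow> real^'m^'n \<Rightarrow> bool" where
  "is_pinv A B \<longleftrightarrow> A ** B ** A = A \<and> B ** A ** B = B \<and>
     transpose (A ** B) = A ** B \<and> transpose (B ** A) = B ** A"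

definition pinv :: "real^'n^'m \<Rightarrow> real^'m^'n" where
  "pinv A = (THE B. is_pinv A B)"

definition projP :: "real^'n^'m \<Rightarrow> real^'n^'n" where
  "projP A = pinv A ** A"

definition supp :: "real^'n \<Rightarrow> 'n set" where
  "supp x = {i. x $ i \<noteq> 0}"

definition wts :: "real^'n^'m \<Rightarrow> 'n \<Rightarrow> real" where
  "wts A i = norm (projP A *v axis i 1)"

definition wl1 :: "real^'n^'m \<Rightarrow> real^'n \<Rightarrow> real" where
  "wl1 A x = (\<Sum>i\<in>UNIV. \<bar>wts A i * x $ i\<bar>)"

text \<open>feasible set: 0 \<le> x \<le> s, A x = A x*  (s = \<infinity> means only x \<ge> 0)\<close>
definition feasible :: "real^'n^'m \<Rightarrow> ereal \<Rightarrow> real^'n \<Rightarrow> real^'n \<Rightarrow> bool" where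
  "feasible A s xs x \<longleftrightarrow> (\<forall>i. 0 \<le> x $ i \<and> ereal (x $ i) \<le> s) \<and> A *v x = A *v xs"

definition is_solution :: "real^'n^'m \<Rightarrow> ereal \<Rightarrow> real^'n \<Rightarrow> real^'n \<Rightarrow> bool" where
  "is_solution A s xs y \<longleftrightarrow> feasible A s xs y \<and> (\<forall>x. feasible A s xs x \<longrightarrow> wl1 A y \<le> wl1 A x)"

definition dagger :: "real^'n^'m \<Rightarrow> 'n set \<Rightarrow> bool" where
  "dagger A J' \<longleftrightarrow> (\<exists>c::real^'n.
     (\<forall>j\<in>J'. ((projP A *v axis j 1) /\<^sub>R norm (projP A *v axis j 1)) \<bullet> c = 1) \<and>
     (\<forall>i\<in>- J'. ((projP A *v axis i 1) /\<^sub>R norm (projP A *v axis i 1)) \<bullet> c < 1))"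

end

theory Submission imports Defs begin

text \<open>
  The vector \<open>c\<close> of (\<open>\<dagger>\<close>) is a dual certificate: \<open>u = P\<^sup>T c\<close> satisfies
  \<open>u\<^sub>i = (P e\<^sub>i) \<bullet> c \<le> w\<^sub>i\<close>, with equality exactly on \<open>J'\<close>. Any feasible \<open>y\<close> has
  \<open>P y = P x\<^sup>*\<close>, so \<open>y \<bullet> u = x\<^sup>* \<bullet> u = \<parallel>W x\<^sup>*\<parallel>\<^sub>1\<close> because \<open>x\<^sup>*\<close> lives on \<open>J'\<close>. For a minimiser
  \<open>y \<ge> 0\<close> this gives \<open>\<Sum>\<^sub>i w\<^sub>i y\<^sub>i \<le> \<Sum>\<^sub>i u\<^sub>i y\<^sub>i\<close>, i.e. \<open>\<Sum>\<^sub>i (w\<^sub>i - u\<^sub>i) y\<^sub>i \<le> 0\<close> with nonnegative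
  terms, so \<open>y\<^sub>i = 0\<close> wherever \<open>u\<^sub>i < w\<^sub>i\<close>, that is, off \<open>J'\<close>.

  As \<open>pinv\<close> is a definite description, the one property of \<open>P\<close> used, \<open>A P = A\<close>,
  needs existence and uniqueness of the Moore--Penrose inverse. It is built as the
  inverse of \<open>A\<close> on its row space composed with the orthogonal projection onto its
  column space; then \<open>A B\<close> and \<open>B A\<close> are these two orthogonal projections.
\<close>

lemma orthogonal_projection_exists:
  fixes S :: "'a::euclidean_space set"
  assumes "subspace S"
  obtains p where "linear p" "\<And>y. p y \<in> S" "\<And>y w. w \<in> S \<Longrightarrow> (y - p y) \<bullet> w = 0"
proof -
  have proj: "\<exists>q. q \<in> S \<and> (\<forall>w\<in>S. (y - q) \<bullet> w = 0)" for y
  proof -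
    obtain q r where q: "q \<in> span S" and r: "\<And>w. w \<in> span S \<Longrightarrow> orthogonal r w"
      and y: "y = q + r"
      using orthogonal_subspace_decomp_exists by blast
    have "span S = S" using assms by (simp add: span_eq_iff)
    with q r show ?thesis
      unfolding y orthogonal_def by (intro exI[of _ q]) auto
  qed
  have unique: "q = q'"
    if "q \<in> S" "\<forall>w\<in>S. (y - q) \<bullet> w = 0" "q' \<in> S" "\<forall>w\<in>S. (y - q') \<bullet> w = 0" for y q q'
  proof -
    have "(y - q') \<bullet> (q - q') - (y - q) \<bullet> (q - q') = 0"
      using that assms by (simp add: subspace_diff)
    then have "(q - q') \<bullet> (q - q') = 0" by (simp add: inner_diff_left)
    then show ?thesis by simp
  qed
  define p where "p y = (SOME q. q \<in> S \<and> (\<forall>w\<in>S. (y - q) \<bullet> w = 0))" for y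
  have pS: "p y \<in> S" and p_orth: "\<forall>w\<in>S. (y - p y) \<bullet> w = 0" for y
    using someI_ex[OF proj[of y]] unfolding p_def by blast+
  have "linear p"
  proof
    fix a b
    have "a + b - (p a + p b) = (a - p a) + (b - p b)" by simp
    then have "\<forall>w\<in>S. (a + b - (p a + p b)) \<bullet> w = 0"
      using p_orth by (simp only: inner_add_left) simp
    moreover have "p a + p b \<in> S" using pS assms by (simp add: subspace_add)
    ultimately show "p (a + b) = p a + p b"
      using unique pS p_orth by blast
  next
    fix c x
    have "c *\<^sub>R x - c *\<^sub>R p x = c *\<^sub>R (x - p x)" by (simp add: scaleR_right_diff_distrib)
    then have "\<forall>w\<in>S. (c *\<^sub>R x - c *\<^sub>R p x) \<bullet> w = 0"
      using p_orth by (simp only: inner_scaleR_left) simp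
    moreover have "c *\<^sub>R p x \<in> S" using pS assms by (simp add: subspace_scale)
    ultimately show "p (c *\<^sub>R x) = c *\<^sub>R p x"
      using unique pS p_orth by blast
  qed
  with pS p_orth that show thesis by blast
qed

lemma orthogonal_projection_id:
  assumes "subspace S" "x \<in> S" "\<And>y. p y \<in> S" "\<And>y w. w \<in> S \<Longrightarrow> (y - p y) \<bullet> w = 0"
  shows "p x = x"
proof -
  have "(x - p x) \<bullet> (x - p x) = 0"
    using assms by (simp add: subspace_diff)
  then show ?thesis by simp
qed

lemma orthogonal_projection_self_adjoint:
  assumes "\<And>y. p y \<in> S" "\<And>y w. w \<in> S \<Longrightarrow> (y - p y) \<bullet> w = 0"
  shows "p x \<bullet> z = x \<bullet> p z"
proof -
  have "(z - p z) \<bullet> p x = 0" "(x - p x) \<bullet> p z = 0"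
    using assms by blast+
  then have "p x \<bullet> z = p x \<bullet> p z" "x \<bullet> p z = p x \<bullet> p z"
    by (metis inner_commute inner_diff_left eq_iff_diff_eq_0)+
  then show ?thesis by simp
qed

lemma transpose_eq_if_self_adjoint:
  fixes M :: "real^'n^'n"
  assumes "\<And>x z. (M *v x) \<bullet> z = x \<bullet> (M *v z)"
  shows "transpose M = M"
proof -
  have "(\<lambda>z. transpose M *v z) = (\<lambda>z. M *v z)"
    using adjoint_unique[of "\<lambda>x. M *v x" "\<lambda>z. M *v z"] assms adjoint_matrix[of M] by simp
  then show ?thesis by (metis matrix_eq)
qed

lemma row_space_orthogonal_null_space:
  fixes A :: "real^'n^'m"
  assumes "A *v x = 0"
  shows "(transpose A *v z) \<bullet> x = 0"
  using dot_lmul_matrix[of z A x] assms by simp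

lemma pinv_exists:
  fixes A :: "real^'n^'m"
  shows "\<exists>B. is_pinv A B"
proof -
  define V where "V = range (\<lambda>z. transpose A *v z)"
  define R where "R = range (\<lambda>x. A *v x)"
  have "subspace V" "subspace R"
    unfolding V_def R_def by (rule linear_subspace_image[OF matrix_vector_mul_linear subspace_UNIV])+
  obtain q where "linear q" and qV: "\<And>x. q x \<in> V"
    and q_orth: "\<And>x v. v \<in> V \<Longrightarrow> (x - q x) \<bullet> v = 0"
    using orthogonal_projection_exists[OF \<open>subspace V\<close>] by metis
  obtain p where "linear p" and pR: "\<And>y. p y \<in> R"
    and p_orth: "\<And>y r. r \<in> R \<Longrightarrow> (y - p y) \<bullet> r = 0"
    using orthogonal_projection_exists[OF \<open>subspace R\<close>] by metis
  have A_q: "A *v q x = A *v x" for x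
  proof -
    have "transpose A *v (A *v (x - q x)) \<in> V" unfolding V_def by (rule rangeI)
    then have "(x - q x) \<bullet> (transpose A *v (A *v (x - q x))) = 0" by (rule q_orth)
    then have "(A *v (x - q x)) \<bullet> (A *v (x - q x)) = 0"
      using dot_lmul_matrix[of "A *v (x - q x)" A "x - q x"] by (simp add: inner_commute)
    then show ?thesis by (simp add: matrix_vector_mult_diff_distrib)
  qed
  have "inj_on (\<lambda>x. A *v x) V"
  proof (rule inj_onI)
    fix a b assume "a \<in> V" "b \<in> V" and eq: "A *v a = A *v b"
    then have "a - b \<in> V" using \<open>subspace V\<close> by (simp add: subspace_diff)
    then obtain z where z: "a - b = transpose A *v z" unfolding V_def by blast
    have "A *v (a - b) = 0" using eq by (simp add: matrix_vector_mult_diff_distrib)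
    then have "(a - b) \<bullet> (a - b) = 0"
      unfolding z by (rule row_space_orthogonal_null_space)
    then show "a = b" by simp
  qed
  then obtain g where gV: "range g \<subseteq> V" and "linear g" and g_A_V: "\<And>v. v \<in> V \<Longrightarrow> g (A *v v) = v"
    using linear_exists_left_inverse_on[OF matrix_vector_mul_linear[of A] \<open>subspace V\<close>] by blast
  have g_A: "g (A *v x) = q x" for x
    using g_A_V[OF qV[of x]] A_q[of x] by simp
  define B where "B = matrix (g \<circ> p)"
  have B: "B *v y = g (p y)" for y
    unfolding B_def using linear_compose[OF \<open>linear p\<close> \<open>linear g\<close>] by simp
  have p_A: "p (A *v x) = A *v x" for x
    using orthogonal_projection_id[OF \<open>subspace R\<close> _ pR p_orth] unfolding R_def by blast
  have AB: "A *v (B *v y) = p y" for y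
  proof -
    obtain x where "p y = A *v x" using pR unfolding R_def by blast
    then show ?thesis by (simp add: B g_A A_q)
  qed
  have BA: "B *v (A *v x) = q x" for x
    by (simp add: B p_A g_A)
  have q_B: "q (B *v y) = B *v y" for y
    using orthogonal_projection_id[OF \<open>subspace V\<close> _ qV q_orth] gV unfolding B by blast
  have "A ** B ** A = A"
    by (simp add: matrix_eq AB p_A flip: matrix_vector_mul_assoc)
  moreover have "B ** A ** B = B"
    by (simp add: matrix_eq BA q_B flip: matrix_vector_mul_assoc)
  moreover have "transpose (A ** B) = A ** B"
    using orthogonal_projection_self_adjoint[of p R, OF pR p_orth]
    by (intro transpose_eq_if_self_adjoint) (simp add: AB flip: matrix_vector_mul_assoc)
  moreover have "transpose (B ** A) = B ** A"
    using orthogonal_projection_self_adjoint[of q V, OF qV q_orth]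
    by (intro transpose_eq_if_self_adjoint) (simp add: BA flip: matrix_vector_mul_assoc)
  ultimately show ?thesis unfolding is_pinv_def by blast
qed

lemma pinv_unique:
  fixes A :: "real^'n^'m"
  assumes hB: "is_pinv A B" and hC: "is_pinv A C"
  shows "B = C"
proof -
  have b1: "A ** B ** A = A" and b2: "B ** A ** B = B" and b3: "transpose (A ** B) = A ** B"
    and b4: "transpose (B ** A) = B ** A" using hB unfolding is_pinv_def by auto
  have c1: "A ** C ** A = A" and c2: "C ** A ** C = C" and c3: "transpose (A ** C) = A ** C"
    and c4: "transpose (C ** A) = C ** A" using hC unfolding is_pinv_def by auto
  have h1: "A ** B = transpose B ** transpose A" using b3 by (simp add: matrix_transpose_mul)
  have h2: "transpose A = transpose A ** transpose C ** transpose A"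
    using arg_cong[OF c1, of transpose] by (simp add: matrix_transpose_mul matrix_mul_assoc)
  have h3: "transpose C ** transpose A = A ** C" using c3 by (simp add: matrix_transpose_mul)
  have "B = B ** (A ** B)" using b2 by (simp add: matrix_mul_assoc)
  also have "\<dots> = B ** transpose B ** transpose A" using h1 by (simp add: matrix_mul_assoc)
  also have "\<dots> = B ** transpose B ** transpose A ** (transpose C ** transpose A)"
    using h2 by (metis matrix_mul_assoc)
  also have "\<dots> = B ** (A ** B) ** (A ** C)" using h1 h3 by (metis matrix_mul_assoc)
  also have "\<dots> = B ** A ** C" using b2 by (metis matrix_mul_assoc)
  finally have eB: "B = B ** A ** C" .
  have g1: "C ** A = transpose A ** transpose C" using c4 by (simp add: matrix_transpose_mul)
  have g3: "transpose A ** transpose B = B ** A" using b4 by (simp add: matrix_transpose_mul)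
  have h2': "transpose A = transpose A ** transpose B ** transpose A"
    using arg_cong[OF b1, of transpose] by (simp add: matrix_transpose_mul matrix_mul_assoc)
  have "C = (C ** A) ** C" using c2 by (simp add: matrix_mul_assoc)
  also have "\<dots> = transpose A ** transpose C ** C" using g1 by simp
  also have "\<dots> = (transpose A ** transpose B) ** (transpose A ** transpose C) ** C"
    using h2' by (metis matrix_mul_assoc)
  also have "\<dots> = (B ** A) ** (C ** A) ** C" using g1 g3 by simp
  also have "\<dots> = B ** A ** C" using c2 by (metis matrix_mul_assoc)
  finally show ?thesis using eB by simp
qed

lemma pinv_is_pinv: "is_pinv A (pinv A)"
  unfolding pinv_def by (rule theI') (use pinv_exists pinv_unique in blast)

lemma mult_projP: "A ** projP A = A"
  using pinv_is_pinv[of A] unfolding is_pinv_def projP_def by (simp add: matrix_mul_assoc)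

lemma projP_axis_neq_0:
  assumes "A *v axis i 1 \<noteq> 0"
  shows "projP A *v axis i 1 \<noteq> 0"
  using assms mult_projP[of A] by (metis matrix_vector_mul_assoc matrix_vector_mult_0_right)

lemma inner_matrix_axis:
  fixes M :: "real^'n^'m"
  shows "(M *v axis i 1) \<bullet> c = (transpose M *v c) $ i"
  by (metis dot_lmul_matrix inner_axis inner_commute mult.right_neutral
      inner_real_def vector_transpose_matrix)

lemma dagger_certificate:
  assumes "\<forall>i. A *v axis i 1 \<noteq> 0" and "dagger A K"
  obtains c where "\<forall>j\<in>K. (transpose (projP A) *v c) $ j = wts A j"
    and "\<forall>i\<in>-K. (transpose (projP A) *v c) $ i < wts A i"
proof -
  obtain c where cK: "\<forall>j\<in>K. ((projP A *v axis j 1) /\<^sub>R norm (projP A *v axis j 1)) \<bullet> c = 1"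
    and cN: "\<forall>i\<in>-K. ((projP A *v axis i 1) /\<^sub>R norm (projP A *v axis i 1)) \<bullet> c < 1"
    using assms(2) unfolding dagger_def by blast
  have pos: "0 < wts A i" for i
    using projP_axis_neq_0[of A i] assms(1) unfolding wts_def by simp
  have normalized: "((projP A *v axis i 1) /\<^sub>R norm (projP A *v axis i 1)) \<bullet> c
      = (transpose (projP A) *v c) $ i / wts A i" for i
    by (simp add: inner_matrix_axis wts_def divide_inverse mult.commute)
  show thesis
  proof (rule that)
    show "\<forall>j\<in>K. (transpose (projP A) *v c) $ j = wts A j"
      using cK pos[THEN less_imp_neq] by (simp only: normalized) simp
    show "\<forall>i\<in>-K. (transpose (projP A) *v c) $ i < wts A i"
      using cN pos by (simp only: normalized) (simp add: divide_less_eq)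
  qed
qed

lemma supp_subset_if_inner_le:
  fixes u w y :: "real^'n"
  assumes "\<forall>i. 0 \<le> y $ i" and "\<forall>i. u $ i \<le> w $ i" and "w \<bullet> y \<le> u \<bullet> y"
  shows "supp y \<subseteq> {i. u $ i = w $ i}"
proof
  fix i assume "i \<in> supp y"
  have nonneg: "0 \<le> (w $ j - u $ j) * y $ j" for j
    using assms(1,2) by simp
  have "(\<Sum>j\<in>UNIV. (w $ j - u $ j) * y $ j) = (w - u) \<bullet> y"
    by (simp add: inner_vec_def)
  also have "\<dots> \<le> 0"
    using assms(3) by (simp add: inner_diff_left)
  finally have "(\<Sum>j\<in>UNIV. (w $ j - u $ j) * y $ j) = 0"
    by (meson antisym sum_nonneg nonneg)
  then have "(w $ i - u $ i) * y $ i = 0"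
    using sum_nonneg_eq_0_iff[of UNIV "\<lambda>j. (w $ j - u $ j) * y $ j"] nonneg by simp
  with \<open>i \<in> supp y\<close> show "i \<in> {i. u $ i = w $ i}"
    unfolding supp_def by simp
qed

lemma wl1_eq_inner:
  assumes "\<forall>i. 0 \<le> x $ i"
  shows "wl1 A x = (\<chi> i. wts A i) \<bullet> x"
  using assms by (simp add: wl1_def inner_vec_def abs_mult wts_def)

lemma feasible_self:
  assumes "\<forall>i. 0 \<le> xs $ i" and "ereal (Max (range (\<lambda>i. \<bar>xs $ i\<bar>))) \<le> s"
  shows "feasible A s xs xs"
  unfolding feasible_def
proof (intro conjI allI)
  fix i
  have "xs $ i \<le> Max (range (\<lambda>i. \<bar>xs $ i\<bar>))"
    by (rule order_trans[OF abs_ge_self Max_ge]) auto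
  then have "ereal (xs $ i) \<le> ereal (Max (range (\<lambda>i. \<bar>xs $ i\<bar>)))"
    by simp
  then show "ereal (xs $ i) \<le> s"
    using assms(2) by (rule order_trans)
qed (use assms(1) in simp_all)

lemma supp_solution_subset:
  fixes A :: "real^'n^'m"
  assumes notnull: "\<forall>i. A *v axis i 1 \<noteq> 0"
    and xs_nonneg: "\<forall>i. 0 \<le> xs $ i"
    and s_ge: "ereal (Max (range (\<lambda>i. \<bar>xs $ i\<bar>))) \<le> s"
    and K_sup: "supp xs \<subseteq> K"
    and K_dag: "dagger A K"
    and sol: "is_solution A s xs y"
  shows "supp y \<subseteq> K"
proof -
  define w where "w = (\<chi> i. wts A i)"
  obtain c where cK: "\<forall>j\<in>K. (transpose (projP A) *v c) $ j = wts A j"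
    and cN: "\<forall>i\<in>-K. (transpose (projP A) *v c) $ i < wts A i"
    using dagger_certificate[OF notnull K_dag] by blast
  define u where "u = transpose (projP A) *v c"
  have y_nonneg: "\<forall>i. 0 \<le> y $ i" and Ay: "A *v y = A *v xs"
    using sol unfolding is_solution_def feasible_def by auto
  have "projP A *v y = projP A *v xs"
    unfolding projP_def by (simp add: Ay flip: matrix_vector_mul_assoc)
  then have u_y: "u \<bullet> y = u \<bullet> xs"
    unfolding u_def by (metis dot_lmul_matrix inner_commute vector_transpose_matrix)
  have u_xs: "u \<bullet> xs = w \<bullet> xs"
    unfolding inner_vec_def
  proof (rule sum.cong)
    fix i
    show "u $ i \<bullet> xs $ i = w $ i \<bullet> xs $ i"
      using cK K_sup unfolding u_def w_def supp_def by (cases "xs $ i = 0") auto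
  qed simp
  have "w \<bullet> y = wl1 A y"
    using wl1_eq_inner[OF y_nonneg] unfolding w_def ..
  also have "\<dots> \<le> wl1 A xs"
    using sol feasible_self[OF xs_nonneg s_ge] unfolding is_solution_def by blast
  also have "\<dots> = u \<bullet> y"
    using wl1_eq_inner[OF xs_nonneg] u_y u_xs unfolding w_def by simp
  finally have "w \<bullet> y \<le> u \<bullet> y" .
  moreover have "\<forall>i. u $ i \<le> w $ i"
  proof
    fix i show "u $ i \<le> w $ i"
      using cK cN unfolding u_def w_def by (cases "i \<in> K") (simp_all add: less_imp_le)
  qed
  ultimately have "supp y \<subseteq> {i. u $ i = w $ i}"
    using supp_subset_if_inner_le[OF y_nonneg] by blast
  also have "\<dots> \<subseteq> K"
    using cN unfolding u_def w_def by force
  finally show ?thesis .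
qed

theorem proposition1:
  fixes A :: "real^'n^'m" and xs :: "real^'n" and s :: ereal and J' :: "'n set" and y :: "real^'n"
  assumes notnull: "\<forall>i. A *v axis i 1 \<noteq> 0"
    and xs_nonneg: "\<forall>i. 0 \<le> xs $ i"
    and s_ge: "ereal (Max (range (\<lambda>i. \<bar>xs $ i\<bar>))) \<le> s"
    and J'_sup: "supp xs \<subseteq> J'"
    and J'_dag: "dagger A J'"
    and sol: "is_solution A s xs y"
  shows "supp y \<subseteq> J' \<and> supp y \<subseteq> \<Inter>{K. supp xs \<subseteq> K \<and> dagger A K}"
  using supp_solution_subset[OF notnull xs_nonneg s_ge _ _ sol] J'_sup J'_dag by blast

end
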